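(* Let $\|\cdot\|_{F_n}$ ($n\ge1$) and $\|\cdot\|_F$ be $F$-norms on $\mathbb{R}^{d+1}$. Then $\|\mathbf{x}\|_{F_n}\to\|\mathbf{x}\|_F$ for every $\mathbf{x}\in\mathbb{R}^{d+1}$ if and only if $d_{H,\|\cdot\|}(S^+_{\|\cdot\|_{F_n}},S^+_{\|\cdot\|_F})\to0$, where $\|\cdot\|$ is any norm on $\mathbb{R}^{d+1}$.
   Context: Condition $(\mathcal{H})$ on $\mathbf{X}=(X_1,\dots,X_d)$: each $X_i$ is a.s. nonnegative with $0<E(X_i)<\infty$. For such $\mathbf{X}$ with distribution function $F$, $\|\mathbf{x}\|_F=E(\max(|x_0|,|x_1|X_1,\dots,|x_d|X_d))$; an $F$-norm is a norm on $\mathbb{R}^{d+1}$ of this form. For an $F$-norm, $S^+_{\|\cdot\|_F}:=\{\mathbf{x}\in[0,\infty)^{d+1}:\|\mathbf{x}\|_F=1\}$. For a norm $\|\cdot\|$ on $\mathbb{R}^{d+1}$ and sets $A,B\subset\mathbb{R}^{d+1}$, $d_{H,\|\cdot\|}(A,B)=\max\{\sup_{\mathbf{y}\in B}\inf_{\mathbf{x}\in A}\|\mathbf{x}-\mathbf{y}\|,\sup_{\mathbf{x}\in A}\inf_{\mathbf{y}\in B}\|\mathbf{x}-\mathbf{y}\|\}$. *)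

theory Defs
  imports "HOL-Probability.Probability"
begin

text \<open>Points of R^{d+1} are pairs (x0, x') with x0 real and x' in R^d (type real^'d).\<close>

definition cond_H :: "(real ^ 'd) measure \<Rightarrow> bool" where
  "cond_H F \<longleftrightarrow> prob_space F \<and> sets F = sets borel \<and>
     (\<forall>i. AE y in F. 0 \<le> y $ i) \<and>
     (\<forall>i. integrable F (\<lambda>y. y $ i) \<and> 0 < (\<integral>y. y $ i \<partial>F))"

definition F_norm_of :: "(real ^ 'd) measure \<Rightarrow> real \<times> (real ^ 'd) \<Rightarrow> real" where
  "F_norm_of F x = (\<integral>y. Max (insert \<bar>fst x\<bar> (range (\<lambda>i. \<bar>snd x $ i\<bar> * y $ i))) \<partial>F)"

definition is_F_norm :: "(real \<times> (real ^ 'd) \<Rightarrow> real) \<Rightarrow> bool" where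
  "is_F_norm N \<longleftrightarrow> (\<exists>F. cond_H F \<and> N = F_norm_of F)"

definition S_plus :: "(real \<times> (real ^ 'd) \<Rightarrow> real) \<Rightarrow> (real \<times> (real ^ 'd)) set" where
  "S_plus N = {x. 0 \<le> fst x \<and> (\<forall>i. 0 \<le> snd x $ i) \<and> N x = 1}"

definition is_norm_fun :: "('a::real_vector \<Rightarrow> real) \<Rightarrow> bool" where
  "is_norm_fun nrm \<longleftrightarrow> (\<forall>x. nrm x = 0 \<longleftrightarrow> x = 0) \<and>
     (\<forall>x y. nrm (x + y) \<le> nrm x + nrm y) \<and>
     (\<forall>c x. nrm (c *\<^sub>R x) = \<bar>c\<bar> * nrm x)"

definition hausdorff_dist_norm ::
  "('a \<Rightarrow> real) \<Rightarrow> 'a::real_vector set \<Rightarrow> 'a set \<Rightarrow> real" where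
  "hausdorff_dist_norm nrm A B =
     max (SUP y\<in>B. INF x\<in>A. nrm (x - y)) (SUP x\<in>A. INF y\<in>B. nrm (x - y))"

end

(* An F-norm N with means m_i = E X_i satisfies
     max (|x_0|, |x_i| m_i) <= N x <= |x_0| + sum_i |x_i| m_i,
   so N is (1 + sum_i m_i)-Lipschitz and S^+_N lies in the ball of radius 1 + sum_i 1/m_i.
   If N_n -> N pointwise, evaluation on the coordinate axes gives m_n -> m; hence the N_n are
   eventually equi-Lipschitz and converge uniformly on a fixed ball containing all the sets S^+,
   and the radial projection x |-> x / N_n x moves each point of S^+_N by O(sup |N_n - N|) into
   S^+_{N_n}, and symmetrically.  Conversely, under Hausdorff convergence the point e_i/m_i of S^+_N
   is approximated by points of S^+_{N_n}, which bounds m_n and so makes the N_n equi-Lipschitz;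
   therefore N_n -> 1 on S^+_N, and homogeneity together with N (|x|) = N x extends this to all x. *)

theory Submission
  imports Defs
begin

section \<open>Norms on Euclidean space\<close>

lemma is_norm_fun_zero: "is_norm_fun nrm \<Longrightarrow> nrm 0 = 0"
  unfolding is_norm_fun_def by blast

lemma is_norm_fun_triangle: "is_norm_fun nrm \<Longrightarrow> nrm (x + y) \<le> nrm x + nrm y"
  unfolding is_norm_fun_def by blast

lemma is_norm_fun_scaleR: "is_norm_fun nrm \<Longrightarrow> nrm (c *\<^sub>R x) = \<bar>c\<bar> * nrm x"
  unfolding is_norm_fun_def by blast

lemma is_norm_fun_minus_commute: "is_norm_fun nrm \<Longrightarrow> nrm (x - y) = nrm (y - x)"
  using is_norm_fun_scaleR[of nrm "-1" "x - y"] by simp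

lemma is_norm_fun_nonneg:
  assumes "is_norm_fun nrm"
  shows "0 \<le> nrm x"
  using is_norm_fun_triangle[OF assms, of x "- x"] is_norm_fun_zero[OF assms]
    is_norm_fun_minus_commute[OF assms, of 0 x] by simp

lemma is_norm_fun_pos: "is_norm_fun nrm \<Longrightarrow> x \<noteq> 0 \<Longrightarrow> 0 < nrm x"
  using is_norm_fun_nonneg[of nrm x] unfolding is_norm_fun_def by force

lemma is_norm_fun_reverse_triangle:
  assumes "is_norm_fun nrm"
  shows "\<bar>nrm x - nrm y\<bar> \<le> nrm (x - y)"
  using is_norm_fun_triangle[OF assms, of "x - y" y] is_norm_fun_triangle[OF assms, of "y - x" x]
    is_norm_fun_minus_commute[OF assms, of x y] by simp

lemma is_norm_fun_sum:
  assumes "is_norm_fun nrm"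
  shows "nrm (sum f S) \<le> (\<Sum>i\<in>S. nrm (f i))"
proof (induction S rule: infinite_finite_induct)
  case (insert a S)
  then show ?case using is_norm_fun_triangle[OF assms, of "f a" "sum f S"] by simp
qed (simp_all add: is_norm_fun_zero[OF assms])

lemma is_norm_fun_le_norm:
  fixes nrm :: "'a::euclidean_space \<Rightarrow> real"
  assumes "is_norm_fun nrm"
  obtains C where "0 < C" "\<And>x. nrm x \<le> C * norm x"
proof
  let ?C = "1 + (\<Sum>b\<in>Basis. nrm b)"
  show "0 < ?C"
    using is_norm_fun_nonneg[OF assms] by (simp add: add_pos_nonneg sum_nonneg)
  fix x :: 'a
  have "nrm x = nrm (\<Sum>b\<in>Basis. (x \<bullet> b) *\<^sub>R b)"
    by (simp add: euclidean_representation)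
  also have "\<dots> \<le> (\<Sum>b\<in>Basis. \<bar>x \<bullet> b\<bar> * nrm b)"
    using is_norm_fun_sum[OF assms, of "\<lambda>b. (x \<bullet> b) *\<^sub>R b" Basis]
    by (simp add: is_norm_fun_scaleR[OF assms])
  also have "\<dots> \<le> (\<Sum>b\<in>Basis. norm x * nrm b)"
    by (intro sum_mono mult_right_mono Basis_le_norm is_norm_fun_nonneg[OF assms])
  also have "\<dots> \<le> ?C * norm x"
    by (simp add: sum_distrib_left algebra_simps)
  finally show "nrm x \<le> ?C * norm x" .
qed

lemma norm_le_is_norm_fun:
  fixes nrm :: "'a::euclidean_space \<Rightarrow> real"
  assumes "is_norm_fun nrm"
  obtains c where "0 < c" "\<And>x. c * norm x \<le> nrm x"
proof -
  obtain C where "0 < C" and C: "\<And>x. nrm x \<le> C * norm x"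
    using is_norm_fun_le_norm[OF assms] by blast
  have "continuous_on UNIV nrm"
  proof (rule lipschitz_on_continuous_on, rule lipschitz_onI)
    show "dist (nrm x) (nrm y) \<le> C * dist x y" for x y
      using is_norm_fun_reverse_triangle[OF assms, of x y] C[of "x - y"]
      by (simp add: dist_real_def dist_norm)
  qed (use \<open>0 < C\<close> in simp)
  moreover obtain b :: 'a where "b \<in> Basis" using nonempty_Basis by blast
  then have "sphere (0::'a) 1 \<noteq> {}" by auto
  ultimately obtain x0 where x0: "x0 \<in> sphere 0 1" and min: "\<And>y. y \<in> sphere 0 1 \<Longrightarrow> nrm x0 \<le> nrm y"
    using continuous_attains_inf[OF compact_sphere, of 0 1 nrm] continuous_on_subset by blast
  show thesis
  proof
    show "0 < nrm x0" using x0 by (intro is_norm_fun_pos[OF assms]) auto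
    show "nrm x0 * norm x \<le> nrm x" for x
    proof (cases "x = 0")
      case False
      then have "nrm x0 \<le> nrm ((1 / norm x) *\<^sub>R x)" by (intro min) simp
      also have "\<dots> = nrm x / norm x" by (simp add: is_norm_fun_scaleR[OF assms])
      finally show ?thesis using False by (simp add: field_simps)
    qed (simp add: is_norm_fun_zero[OF assms])
  qed
qed

section \<open>Hausdorff distance and uniform convergence\<close>

lemma SUP_INF_nonneg_le:
  fixes f :: "'a \<Rightarrow> 'b \<Rightarrow> real"
  assumes "A \<noteq> {}" "B \<noteq> {}" "\<And>x y. 0 \<le> f x y" "\<And>y. y \<in> B \<Longrightarrow> \<exists>x\<in>A. f x y \<le> e"
  shows "0 \<le> (SUP y\<in>B. INF x\<in>A. f x y)" "(SUP y\<in>B. INF x\<in>A. f x y) \<le> e"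
proof -
  have bdd: "bdd_below ((\<lambda>x. f x y) ` A)" for y
    by (rule bdd_belowI2[where m = 0]) (use assms(3) in auto)
  have INF_le: "(INF x\<in>A. f x y) \<le> e" if "y \<in> B" for y
    using assms(4)[OF that] cINF_lower2[OF bdd] by blast
  show "(SUP y\<in>B. INF x\<in>A. f x y) \<le> e"
    by (rule cSUP_least) (use assms(2) INF_le in auto)
  obtain y where "y \<in> B" using assms(2) by blast
  have "bdd_above ((\<lambda>y. INF x\<in>A. f x y) ` B)"
    by (rule bdd_aboveI2[where M = e]) (use INF_le in auto)
  moreover note \<open>y \<in> B\<close>
  moreover have "0 \<le> (INF x\<in>A. f x y)"
    by (rule cINF_greatest) (use assms in auto)
  ultimately show "0 \<le> (SUP y\<in>B. INF x\<in>A. f x y)"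
    by (rule cSUP_upper2)
qed

lemma SUP_INF_less_imp_ex_less:
  fixes f :: "'a \<Rightarrow> 'b \<Rightarrow> real"
  assumes "A \<noteq> {}" "\<And>x y. 0 \<le> f x y" "\<And>x y. x \<in> A \<Longrightarrow> y \<in> B \<Longrightarrow> f x y \<le> M"
    and "y \<in> B" "(SUP y\<in>B. INF x\<in>A. f x y) < e"
  shows "\<exists>x\<in>A. f x y < e"
proof -
  have bdd: "bdd_below ((\<lambda>x. f x y) ` A)" for y
    by (rule bdd_belowI2[where m = 0]) (use assms(2) in auto)
  have "(INF x\<in>A. f x y) \<le> M" if "y \<in> B" for y
    using assms(1) cINF_lower2[OF bdd] assms(3)[OF _ that] by blast
  then have "bdd_above ((\<lambda>y. INF x\<in>A. f x y) ` B)"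
    by (intro bdd_aboveI2[where M = M])
  then have "(INF x\<in>A. f x y) < e"
    using cSUP_upper[OF assms(4)] assms(5) by fastforce
  then show ?thesis using cINF_less_iff[OF assms(1) bdd] by blast
qed

lemma abs_hausdorff_dist_norm_le:
  assumes "is_norm_fun nrm" "A \<noteq> {}" "B \<noteq> {}"
    and "\<And>y. y \<in> B \<Longrightarrow> \<exists>x\<in>A. nrm (x - y) \<le> e"
    and "\<And>x. x \<in> A \<Longrightarrow> \<exists>y\<in>B. nrm (x - y) \<le> e"
  shows "\<bar>hausdorff_dist_norm nrm A B\<bar> \<le> e"
  using SUP_INF_nonneg_le[of A B "\<lambda>x y. nrm (x - y)" e] SUP_INF_nonneg_le[of B A "\<lambda>y x. nrm (x - y)" e]
    assms is_norm_fun_nonneg[OF assms(1)]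
  unfolding hausdorff_dist_norm_def by fastforce

lemma hausdorff_dist_norm_less_imp_ex_less:
  assumes "is_norm_fun nrm" "A \<noteq> {}" "\<And>x y. x \<in> A \<Longrightarrow> y \<in> B \<Longrightarrow> nrm (x - y) \<le> M"
    and "y \<in> B" "hausdorff_dist_norm nrm A B < e"
  shows "\<exists>x\<in>A. nrm (x - y) < e"
  using assms(5) SUP_INF_less_imp_ex_less[of A "\<lambda>x y. nrm (x - y)" B M y e] assms(2-4)
    is_norm_fun_nonneg[OF assms(1)]
  unfolding hausdorff_dist_norm_def by auto

lemma equi_lipschitz_tendsto_uniformly_on_compact:
  fixes f :: "nat \<Rightarrow> 'a::metric_space \<Rightarrow> 'b::metric_space"
  assumes "compact S" "\<forall>\<^sub>F n in sequentially. L-lipschitz_on S (f n)" "L-lipschitz_on S g"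
    and "\<And>x. x \<in> S \<Longrightarrow> (\<lambda>n. f n x) \<longlonglongrightarrow> g x" "0 < e"
  shows "\<forall>\<^sub>F n in sequentially. \<forall>x\<in>S. dist (f n x) (g x) < e"
proof -
  define d where "d = e / (3 * (L + 1))"
  have "0 \<le> L" using assms(3) by (rule lipschitz_on_nonneg)
  then have "0 < d" and Ld: "L * d < e / 3"
    using \<open>0 < e\<close> by (simp_all add: d_def field_simps)
  obtain T where "T \<subseteq> S" "finite T" and cover: "S \<subseteq> (\<Union>t\<in>T. ball t d)"
  proof (rule compactE_image[OF assms(1), of S "\<lambda>t. ball t d"])
    show "S \<subseteq> (\<Union>t\<in>S. ball t d)" using \<open>0 < d\<close> by auto
  qed auto
  have "\<forall>\<^sub>F n in sequentially. dist (f n t) (g t) < e / 3" if "t \<in> T" for t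
    using tendstoD[OF assms(4), of t "e / 3"] that \<open>T \<subseteq> S\<close> \<open>0 < e\<close> by auto
  then have "\<forall>\<^sub>F n in sequentially. \<forall>t\<in>T. dist (f n t) (g t) < e / 3"
    using \<open>finite T\<close> by (intro eventually_ball_finite ballI)
  with assms(2) show ?thesis
  proof eventually_elim
    case (elim n)
    show ?case
    proof
      fix x assume "x \<in> S"
      then obtain t where "t \<in> T" "dist t x < d" using cover by auto
      with \<open>T \<subseteq> S\<close> \<open>x \<in> S\<close> have "dist (f n x) (f n t) \<le> L * d" "dist (g t) (g x) \<le> L * d"
        using lipschitz_onD[OF elim(1)] lipschitz_onD[OF assms(3)] \<open>0 \<le> L\<close>
        by (metis dist_commute less_imp_le mult_left_mono order_trans subsetD)+
      moreover have "dist (f n t) (g t) < e / 3" using elim(2) \<open>t \<in> T\<close> by blast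
      ultimately show "dist (f n x) (g x) < e"
        using dist_triangle[of "f n x" "g x" "f n t"] dist_triangle[of "f n t" "g x" "g t"] Ld
        by linarith
    qed
  qed
qed

section \<open>F-norms\<close>

definition abs_coords :: "real \<times> (real ^ 'd) \<Rightarrow> real \<times> (real ^ 'd)" where
  "abs_coords x = (\<bar>fst x\<bar>, \<chi> i. \<bar>snd x $ i\<bar>)"

text \<open>The two-sided bounds, with \<open>m i\<close> in the role of \<open>E X\<^sub>i\<close>, and the invariance under
  coordinatewise absolute values are all that the argument needs to know about F-norms.\<close>

definition F_norm_like :: "(real \<times> (real ^ 'd) \<Rightarrow> real) \<Rightarrow> ('d \<Rightarrow> real) \<Rightarrow> bool" where
  "F_norm_like N m \<longleftrightarrow> (\<forall>i. 0 < m i) \<and>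
     (\<forall>x y. N (x + y) \<le> N x + N y) \<and> (\<forall>c x. N (c *\<^sub>R x) = \<bar>c\<bar> * N x) \<and>
     (\<forall>x. N (abs_coords x) = N x) \<and>
     (\<forall>x. \<bar>fst x\<bar> \<le> N x) \<and> (\<forall>x i. \<bar>snd x $ i\<bar> * m i \<le> N x) \<and>
     (\<forall>x. N x \<le> \<bar>fst x\<bar> + (\<Sum>i\<in>UNIV. \<bar>snd x $ i\<bar> * m i))"

context
  fixes N :: "real \<times> (real ^ 'd) \<Rightarrow> real" and m :: "'d \<Rightarrow> real"
  assumes N: "F_norm_like N m"
begin

lemma F_norm_like_coeff_pos: "0 < m i"
  using N unfolding F_norm_like_def by blast

lemma F_norm_like_scaleR: "N (c *\<^sub>R x) = \<bar>c\<bar> * N x"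
  using N unfolding F_norm_like_def by blast

lemma F_norm_like_abs_coords: "N (abs_coords x) = N x"
  using N unfolding F_norm_like_def by blast

lemma F_norm_like_ge_fst: "\<bar>fst x\<bar> \<le> N x"
  using N unfolding F_norm_like_def by blast

lemma F_norm_like_ge_coord: "\<bar>snd x $ i\<bar> * m i \<le> N x"
  using N unfolding F_norm_like_def by blast

lemma F_norm_like_le_sum: "N x \<le> \<bar>fst x\<bar> + (\<Sum>i\<in>UNIV. \<bar>snd x $ i\<bar> * m i)"
  using N unfolding F_norm_like_def by blast

lemma F_norm_like_is_norm_fun: "is_norm_fun N"
  unfolding is_norm_fun_def
proof (intro conjI allI)
  show "N (x + y) \<le> N x + N y" for x y
    using N unfolding F_norm_like_def by blast
  show "N (c *\<^sub>R x) = \<bar>c\<bar> * N x" for c x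
    by (rule F_norm_like_scaleR)
  show "N x = 0 \<longleftrightarrow> x = 0" for x
  proof
    assume "N x = 0"
    then have "fst x = 0" "snd x $ i = 0" for i
      using F_norm_like_ge_fst[of x] F_norm_like_ge_coord[of x i] F_norm_like_coeff_pos[of i]
      by (auto simp: mult_le_0_iff)
    then show "x = 0" by (simp add: prod_eq_iff vec_eq_iff)
  qed (use F_norm_like_scaleR[of 0 0] in simp)
qed

lemma F_norm_like_lipschitz: "(1 + (\<Sum>i\<in>UNIV. m i))-lipschitz_on UNIV N"
proof (rule lipschitz_onI)
  have le_norm: "N z \<le> (1 + (\<Sum>i\<in>UNIV. m i)) * norm z" for z
  proof -
    have "N z \<le> \<bar>fst z\<bar> + (\<Sum>i\<in>UNIV. \<bar>snd z $ i\<bar> * m i)"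
      by (rule F_norm_like_le_sum)
    also have "\<dots> \<le> norm z + (\<Sum>i\<in>UNIV. norm z * m i)"
    proof (intro add_mono sum_mono mult_right_mono less_imp_le[OF F_norm_like_coeff_pos])
      show "\<bar>fst z\<bar> \<le> norm z" using norm_fst_le[of "fst z" "snd z"] by simp
      show "\<bar>snd z $ i\<bar> \<le> norm z" for i
        using component_le_norm_cart[of "snd z" i] norm_snd_le[of "snd z" "fst z"] by simp
    qed
    finally show ?thesis by (simp add: sum_distrib_left algebra_simps)
  qed
  show "dist (N x) (N y) \<le> (1 + (\<Sum>i\<in>UNIV. m i)) * dist x y" for x y
    using is_norm_fun_reverse_triangle[OF F_norm_like_is_norm_fun, of x y] le_norm[of "x - y"]
    by (simp add: dist_real_def dist_norm)
  show "0 \<le> 1 + (\<Sum>i\<in>UNIV. m i)"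
    using F_norm_like_coeff_pos by (simp add: sum_nonneg less_imp_le add_nonneg_nonneg)
qed

lemma norm_le_F_norm_like: "norm x \<le> N x * (1 + (\<Sum>i\<in>UNIV. 1 / m i))"
proof -
  have "norm x \<le> \<bar>fst x\<bar> + norm (snd x)"
    using norm_Pair_le[of "fst x" "snd x"] by simp
  also have "\<dots> \<le> N x + (\<Sum>i\<in>UNIV. N x * (1 / m i))"
  proof (rule add_mono[OF F_norm_like_ge_fst order_trans[OF norm_le_l1_cart sum_mono]])
    show "\<bar>snd x $ i\<bar> \<le> N x * (1 / m i)" for i
      using F_norm_like_ge_coord[of x i] F_norm_like_coeff_pos[of i] by (simp add: field_simps)
  qed
  finally show ?thesis by (simp add: sum_distrib_left algebra_simps)
qed

lemma F_norm_like_axis: "N (0, axis i c) = \<bar>c\<bar> * m i"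
proof (rule antisym)
  have "(\<Sum>j\<in>UNIV. \<bar>axis i c $ j\<bar> * m j) = (\<Sum>j\<in>UNIV. if j = i then \<bar>c\<bar> * m i else 0)"
    by (rule sum.cong) (auto simp: axis_def)
  then have "(\<Sum>j\<in>UNIV. \<bar>axis i c $ j\<bar> * m j) = \<bar>c\<bar> * m i"
    by simp
  then show "N (0, axis i c) \<le> \<bar>c\<bar> * m i"
    using F_norm_like_le_sum[of "(0, axis i c)"] by simp
  show "\<bar>c\<bar> * m i \<le> N (0, axis i c)"
    using F_norm_like_ge_coord[of "(0, axis i c)" i] by simp
qed

lemma S_plus_nonempty: "S_plus N \<noteq> {}"
proof -
  have "N (1, 0) \<le> 1" "1 \<le> N (1, 0)"
    using F_norm_like_le_sum[of "(1, 0)"] F_norm_like_ge_fst[of "(1, 0)"] by simp_all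
  then have "(1, 0) \<in> S_plus N" by (simp add: S_plus_def)
  then show ?thesis by blast
qed

lemma S_plus_subset_cball: "S_plus N \<subseteq> cball 0 (1 + (\<Sum>i\<in>UNIV. 1 / m i))"
proof
  fix x assume "x \<in> S_plus N"
  then show "x \<in> cball 0 (1 + (\<Sum>i\<in>UNIV. 1 / m i))"
    using norm_le_F_norm_like[of x] by (simp add: S_plus_def)
qed

lemma scaleR_inverse_in_S_plus:
  assumes "0 \<le> fst x" "\<forall>i. 0 \<le> snd x $ i" "0 < N x"
  shows "(1 / N x) *\<^sub>R x \<in> S_plus N"
  using assms F_norm_like_scaleR[of "1 / N x" x] by (simp add: S_plus_def)

end

definition F_norm_integrand :: "real \<times> (real ^ 'd) \<Rightarrow> real ^ 'd \<Rightarrow> real" where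
  "F_norm_integrand x y = Max (insert \<bar>fst x\<bar> (range (\<lambda>i. \<bar>snd x $ i\<bar> * y $ i)))"

lemma F_norm_of_eq_integral: "F_norm_of F x = (\<integral>y. F_norm_integrand x y \<partial>F)"
  by (simp add: F_norm_of_def F_norm_integrand_def)

lemma F_norm_integrand_le_iff:
  "F_norm_integrand x y \<le> b \<longleftrightarrow> \<bar>fst x\<bar> \<le> b \<and> (\<forall>i. \<bar>snd x $ i\<bar> * y $ i \<le> b)"
  by (simp add: F_norm_integrand_def Max_le_iff)

lemma F_norm_integrand_ge_fst: "\<bar>fst x\<bar> \<le> F_norm_integrand x y"
  by (simp add: F_norm_integrand_def)

lemma F_norm_integrand_ge_coord: "\<bar>snd x $ i\<bar> * y $ i \<le> F_norm_integrand x y"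
  unfolding F_norm_integrand_def by (rule Max_ge) auto

lemma F_norm_integrand_nonneg: "0 \<le> F_norm_integrand x y"
  using F_norm_integrand_ge_fst[of x y] by linarith

lemma F_norm_integrand_le_sum:
  assumes "\<forall>i. 0 \<le> y $ i"
  shows "F_norm_integrand x y \<le> \<bar>fst x\<bar> + (\<Sum>i\<in>UNIV. \<bar>snd x $ i\<bar> * y $ i)"
  unfolding F_norm_integrand_le_iff
proof (intro conjI allI)
  have "0 \<le> (\<Sum>i\<in>UNIV. \<bar>snd x $ i\<bar> * y $ i)" using assms by (simp add: sum_nonneg)
  then show "\<bar>fst x\<bar> \<le> \<bar>fst x\<bar> + (\<Sum>i\<in>UNIV. \<bar>snd x $ i\<bar> * y $ i)" by simp
  show "\<bar>snd x $ i\<bar> * y $ i \<le> \<bar>fst x\<bar> + (\<Sum>i\<in>UNIV. \<bar>snd x $ i\<bar> * y $ i)" for i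
    using member_le_sum[of i UNIV "\<lambda>i. \<bar>snd x $ i\<bar> * y $ i"] assms by simp
qed

lemma F_norm_integrand_add_le:
  assumes "\<forall>i. 0 \<le> y $ i"
  shows "F_norm_integrand (x + z) y \<le> F_norm_integrand x y + F_norm_integrand z y"
  unfolding F_norm_integrand_le_iff
proof (intro conjI allI)
  show "\<bar>fst (x + z)\<bar> \<le> F_norm_integrand x y + F_norm_integrand z y"
    using F_norm_integrand_ge_fst[of x y] F_norm_integrand_ge_fst[of z y] by simp
  fix i
  have "\<bar>snd (x + z) $ i\<bar> * y $ i \<le> \<bar>snd x $ i\<bar> * y $ i + \<bar>snd z $ i\<bar> * y $ i"
    using assms by (simp add: mult_right_mono flip: distrib_right)
  also have "\<dots> \<le> F_norm_integrand x y + F_norm_integrand z y"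
    by (intro add_mono F_norm_integrand_ge_coord)
  finally show "\<bar>snd (x + z) $ i\<bar> * y $ i \<le> F_norm_integrand x y + F_norm_integrand z y" .
qed

lemma F_norm_integrand_scaleR: "F_norm_integrand (c *\<^sub>R x) y = \<bar>c\<bar> * F_norm_integrand x y"
proof -
  have "mono ((*) \<bar>c\<bar>)" by (simp add: mono_def mult_left_mono)
  then have "\<bar>c\<bar> * F_norm_integrand x y
      = Max ((*) \<bar>c\<bar> ` insert \<bar>fst x\<bar> (range (\<lambda>i. \<bar>snd x $ i\<bar> * y $ i)))"
    unfolding F_norm_integrand_def by (rule mono_Max_commute) auto
  also have "\<dots> = F_norm_integrand (c *\<^sub>R x) y"
    by (simp add: F_norm_integrand_def image_image abs_mult mult.assoc)
  finally show ?thesis by simp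
qed

lemma F_norm_integrand_abs_coords: "F_norm_integrand (abs_coords x) = F_norm_integrand x"
  by (rule ext) (simp add: F_norm_integrand_def abs_coords_def)

lemma borel_measurable_F_norm_integrand: "F_norm_integrand x \<in> borel_measurable borel"
proof -
  have "(\<lambda>y. Max (range (\<lambda>i. \<bar>snd x $ i\<bar> * y $ i))) \<in> borel_measurable borel"
    by (rule borel_measurable_Max) auto
  then show ?thesis
    unfolding F_norm_integrand_def by (simp add: Max_insert)
qed

lemma cond_H_AE_nonneg: "cond_H F \<Longrightarrow> AE y in F. \<forall>i. 0 \<le> y $ i"
  by (simp add: cond_H_def AE_all_countable)

lemma has_bochner_integral_F_norm_bound:
  assumes "cond_H F"
  shows "has_bochner_integral F (\<lambda>y. \<bar>fst x\<bar> + (\<Sum>i\<in>UNIV. \<bar>snd x $ i\<bar> * y $ i))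
           (\<bar>fst x\<bar> + (\<Sum>i\<in>UNIV. \<bar>snd x $ i\<bar> * (\<integral>y. y $ i \<partial>F)))"
proof -
  interpret prob_space F using assms by (simp add: cond_H_def)
  have "has_bochner_integral F (\<lambda>y. y $ i) (\<integral>y. y $ i \<partial>F)" for i
    using assms by (intro has_bochner_integral_integrable) (simp add: cond_H_def)
  moreover have "has_bochner_integral F (\<lambda>y. \<bar>fst x\<bar>) \<bar>fst x\<bar>"
    using has_bochner_integral_integrable[OF integrable_const[of "\<bar>fst x\<bar>"]] by (simp add: prob_space)
  ultimately show ?thesis
    by (intro has_bochner_integral_add has_bochner_integral_sum has_bochner_integral_mult_right)
qed

lemma integrable_F_norm_integrand:
  assumes "cond_H F"
  shows "integrable F (F_norm_integrand x)"
proof -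
  have sets_F: "sets F = sets borel" using assms by (simp add: cond_H_def)
  have "F_norm_integrand x \<in> borel_measurable F"
    by (subst measurable_cong_sets[OF sets_F refl]) (rule borel_measurable_F_norm_integrand)
  moreover have "AE y in F. norm (F_norm_integrand x y)
      \<le> norm (\<bar>fst x\<bar> + (\<Sum>i\<in>UNIV. \<bar>snd x $ i\<bar> * y $ i))"
    using cond_H_AE_nonneg[OF assms]
  proof eventually_elim
    case (elim y)
    then have "F_norm_integrand x y \<le> \<bar>fst x\<bar> + (\<Sum>i\<in>UNIV. \<bar>snd x $ i\<bar> * y $ i)"
      by (rule F_norm_integrand_le_sum)
    then show ?case unfolding real_norm_def using F_norm_integrand_nonneg[of x y] by arith
  qed
  ultimately show ?thesis
    by (rule Bochner_Integration.integrable_bound[OF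
          integrable.intros[OF has_bochner_integral_F_norm_bound[OF assms]]])
qed

lemma F_norm_of_F_norm_like:
  assumes "cond_H F"
  shows "F_norm_like (F_norm_of F) (\<lambda>i. \<integral>y. y $ i \<partial>F)"
  unfolding F_norm_like_def F_norm_of_eq_integral
proof (intro conjI allI)
  interpret prob_space F using assms by (simp add: cond_H_def)
  let ?g = F_norm_integrand
  note int_g = integrable_F_norm_integrand[OF assms]
  note nonneg = cond_H_AE_nonneg[OF assms]
  show "0 < (\<integral>y. y $ i \<partial>F)" for i using assms by (simp add: cond_H_def)
  show "(\<integral>y. ?g (x + z) y \<partial>F) \<le> (\<integral>y. ?g x y \<partial>F) + (\<integral>y. ?g z y \<partial>F)" for x z
  proof -
    have "AE y in F. ?g (x + z) y \<le> ?g x y + ?g z y"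
      using nonneg by eventually_elim (rule F_norm_integrand_add_le)
    then have "(\<integral>y. ?g (x + z) y \<partial>F) \<le> (\<integral>y. ?g x y + ?g z y \<partial>F)"
      by (intro integral_mono_AE int_g Bochner_Integration.integrable_add)
    then show ?thesis by (simp add: int_g)
  qed
  show "(\<integral>y. ?g (c *\<^sub>R x) y \<partial>F) = \<bar>c\<bar> * (\<integral>y. ?g x y \<partial>F)" for c x
    by (simp add: F_norm_integrand_scaleR)
  show "(\<integral>y. ?g (abs_coords x) y \<partial>F) = (\<integral>y. ?g x y \<partial>F)" for x
    by (simp add: F_norm_integrand_abs_coords)
  show "\<bar>fst x\<bar> \<le> (\<integral>y. ?g x y \<partial>F)" for x
    using integral_mono[OF integrable_const int_g, of "\<bar>fst x\<bar>"]
    by (simp add: F_norm_integrand_ge_fst prob_space)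
  show "\<bar>snd x $ i\<bar> * (\<integral>y. y $ i \<partial>F) \<le> (\<integral>y. ?g x y \<partial>F)" for x i
    using assms integral_mono[of F "\<lambda>y. \<bar>snd x $ i\<bar> * y $ i" "?g x"]
    by (simp add: F_norm_integrand_ge_coord int_g cond_H_def)
  show "(\<integral>y. ?g x y \<partial>F) \<le> \<bar>fst x\<bar> + (\<Sum>i\<in>UNIV. \<bar>snd x $ i\<bar> * (\<integral>y. y $ i \<partial>F))" for x
  proof -
    note bound = has_bochner_integral_F_norm_bound[OF assms, of x]
    have "AE y in F. ?g x y \<le> \<bar>fst x\<bar> + (\<Sum>i\<in>UNIV. \<bar>snd x $ i\<bar> * y $ i)"
      using nonneg by eventually_elim (rule F_norm_integrand_le_sum)
    with int_g integrable.intros[OF bound] show ?thesis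
      by (simp add: integral_mono_AE flip: has_bochner_integral_integral_eq[OF bound])
  qed
qed

lemma is_F_norm_imp_F_norm_like: "is_F_norm N \<Longrightarrow> \<exists>m. F_norm_like N m"
  unfolding is_F_norm_def using F_norm_of_F_norm_like by blast

section \<open>Pointwise convergence implies Hausdorff convergence\<close>

lemma abs_inverse_sub_one_le:
  fixes t \<eta> :: real
  assumes "\<bar>t - 1\<bar> \<le> \<eta>" "\<eta> \<le> 1 / 2"
  shows "\<bar>1 / t - 1\<bar> \<le> 2 * \<eta>"
proof -
  have "1 / 2 \<le> t" using assms by linarith
  then have "\<bar>1 / t - 1\<bar> = \<bar>t - 1\<bar> / t" by (simp add: field_simps abs_minus_commute)
  also have "\<dots> \<le> \<bar>t - 1\<bar> / (1 / 2)" using \<open>1 / 2 \<le> t\<close> by (intro divide_left_mono) auto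
  finally show ?thesis using assms(1) by simp
qed

lemma ex_S_plus_near:
  assumes N: "F_norm_like N m" and nrm: "is_norm_fun nrm"
    and "0 \<le> fst y" "\<forall>i. 0 \<le> snd y $ i" "\<bar>N y - 1\<bar> \<le> \<eta>" "\<eta> \<le> 1 / 2"
  shows "\<exists>x\<in>S_plus N. nrm (x - y) \<le> 2 * \<eta> * nrm y"
proof
  show "(1 / N y) *\<^sub>R y \<in> S_plus N"
    using assms(3-6) by (intro scaleR_inverse_in_S_plus[OF N]) auto
  have "nrm ((1 / N y) *\<^sub>R y - y) = \<bar>1 / N y - 1\<bar> * nrm y"
    by (metis is_norm_fun_scaleR[OF nrm] scaleR_diff_left scaleR_one)
  also have "\<dots> \<le> 2 * \<eta> * nrm y"
    using assms(5,6) by (intro mult_right_mono abs_inverse_sub_one_le is_norm_fun_nonneg[OF nrm])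
  finally show "nrm ((1 / N y) *\<^sub>R y - y) \<le> 2 * \<eta> * nrm y" .
qed

lemma abs_hausdorff_S_plus_le:
  fixes N N' :: "real \<times> (real ^ 'd) \<Rightarrow> real"
  assumes N: "F_norm_like N m" and N': "F_norm_like N' m'" and nrm: "is_norm_fun nrm"
    and "S_plus N \<subseteq> cball 0 R" "S_plus N' \<subseteq> cball 0 R"
    and close: "\<forall>x\<in>cball 0 R. \<bar>N' x - N x\<bar> \<le> \<eta>" "\<eta> \<le> 1 / 2"
    and C: "\<And>x. nrm x \<le> C * norm x" "0 \<le> C"
  shows "\<bar>hausdorff_dist_norm nrm (S_plus N') (S_plus N)\<bar> \<le> 2 * \<eta> * (C * R)"
proof -
  have near: "\<exists>x\<in>S_plus M. nrm (x - y) \<le> 2 * \<eta> * (C * R)"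
    if "F_norm_like M k" "y \<in> cball 0 R" "0 \<le> fst y" "\<forall>i. 0 \<le> snd y $ i" "\<bar>M y - 1\<bar> \<le> \<eta>"
    for M :: "real \<times> (real ^ 'd) \<Rightarrow> real" and k y
  proof -
    have "0 \<le> \<eta>" using that(5) by linarith
    moreover have "nrm y \<le> C * R"
      using C(1)[of y] that(2) C(2) by (meson mem_cball_0 mult_left_mono order_trans)
    ultimately have "2 * \<eta> * nrm y \<le> 2 * \<eta> * (C * R)" by (simp add: mult_left_mono)
    then show ?thesis
      using ex_S_plus_near[OF that(1) nrm that(3-5) \<open>\<eta> \<le> 1 / 2\<close>] by force
  qed
  show ?thesis
  proof (rule abs_hausdorff_dist_norm_le[OF nrm S_plus_nonempty[OF N'] S_plus_nonempty[OF N]])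
    fix y assume "y \<in> S_plus N"
    then have y: "y \<in> cball 0 R" "0 \<le> fst y" "\<forall>i. 0 \<le> snd y $ i" "N y = 1"
      using assms(4) by (auto simp: S_plus_def)
    then have "\<bar>N' y - 1\<bar> \<le> \<eta>" using close(1) by force
    with y show "\<exists>x\<in>S_plus N'. nrm (x - y) \<le> 2 * \<eta> * (C * R)"
      by (intro near[OF N'])
  next
    fix x assume "x \<in> S_plus N'"
    then have x: "x \<in> cball 0 R" "0 \<le> fst x" "\<forall>i. 0 \<le> snd x $ i" "N' x = 1"
      using assms(5) by (auto simp: S_plus_def)
    then have "\<bar>N x - 1\<bar> \<le> \<eta>" using close(1) by (force simp: abs_minus_commute)
    with x have "\<exists>y\<in>S_plus N. nrm (y - x) \<le> 2 * \<eta> * (C * R)"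
      by (intro near[OF N])
    then show "\<exists>y\<in>S_plus N. nrm (x - y) \<le> 2 * \<eta> * (C * R)"
      by (simp add: is_norm_fun_minus_commute[OF nrm])
  qed
qed

lemma F_norm_like_coeff_tendsto:
  assumes "\<And>n. F_norm_like (Nn n) (mn n)" "F_norm_like N m" "\<And>x. (\<lambda>n. Nn n x) \<longlonglongrightarrow> N x"
  shows "(\<lambda>n. mn n i) \<longlonglongrightarrow> m i"
  using assms(3)[of "(0, axis i 1)"]
  by (simp add: F_norm_like_axis[OF assms(1)] F_norm_like_axis[OF assms(2)])

lemma eventually_lipschitz_and_S_plus_bounded:
  assumes Nn: "\<And>n. F_norm_like (Nn n) (mn n)" and N: "F_norm_like N m"
    and coeff: "\<And>i. (\<lambda>n. mn n i) \<longlonglongrightarrow> m i"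
  shows "\<forall>\<^sub>F n in sequentially. (2 + (\<Sum>i\<in>UNIV. m i))-lipschitz_on UNIV (Nn n) \<and>
           S_plus (Nn n) \<subseteq> cball 0 (2 + (\<Sum>i\<in>UNIV. 1 / m i))"
proof (rule eventually_conj)
  have m_pos: "0 < m i" for i by (rule F_norm_like_coeff_pos[OF N])
  have "(\<lambda>n. 1 + (\<Sum>i\<in>UNIV. mn n i)) \<longlonglongrightarrow> 1 + (\<Sum>i\<in>UNIV. m i)"
    by (intro tendsto_intros coeff)
  then have "\<forall>\<^sub>F n in sequentially. 1 + (\<Sum>i\<in>UNIV. mn n i) < 2 + (\<Sum>i\<in>UNIV. m i)"
    by (rule order_tendstoD) simp
  then show "\<forall>\<^sub>F n in sequentially. (2 + (\<Sum>i\<in>UNIV. m i))-lipschitz_on UNIV (Nn n)"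
    by eventually_elim (rule lipschitz_on_mono[OF F_norm_like_lipschitz[OF Nn]], auto)
  have "(\<lambda>n. 1 + (\<Sum>i\<in>UNIV. 1 / mn n i)) \<longlonglongrightarrow> 1 + (\<Sum>i\<in>UNIV. 1 / m i)"
    using m_pos by (intro tendsto_intros coeff) (metis less_irrefl)
  then have "\<forall>\<^sub>F n in sequentially. 1 + (\<Sum>i\<in>UNIV. 1 / mn n i) < 2 + (\<Sum>i\<in>UNIV. 1 / m i)"
    by (rule order_tendstoD) simp
  then show "\<forall>\<^sub>F n in sequentially. S_plus (Nn n) \<subseteq> cball 0 (2 + (\<Sum>i\<in>UNIV. 1 / m i))"
    by eventually_elim (rule order_trans[OF S_plus_subset_cball[OF Nn] subset_cball], simp)
qed

lemma hausdorff_S_plus_tendsto_zero: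
  assumes Nn: "\<And>n. F_norm_like (Nn n) (mn n)" and N: "F_norm_like N m" and nrm: "is_norm_fun nrm"
    and lim: "\<And>x. (\<lambda>n. Nn n x) \<longlonglongrightarrow> N x"
  shows "(\<lambda>n. hausdorff_dist_norm nrm (S_plus (Nn n)) (S_plus N)) \<longlonglongrightarrow> 0"
proof (rule tendstoI)
  fix e :: real assume "0 < e"
  define L where "L = 2 + (\<Sum>i\<in>UNIV. m i)"
  define R where "R = 2 + (\<Sum>i\<in>UNIV. 1 / m i)"
  have "\<forall>\<^sub>F n in sequentially. L-lipschitz_on UNIV (Nn n) \<and> S_plus (Nn n) \<subseteq> cball 0 R"
    unfolding L_def R_def
    by (rule eventually_lipschitz_and_S_plus_bounded[OF Nn N F_norm_like_coeff_tendsto[OF Nn N lim]])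
  then have lip: "\<forall>\<^sub>F n in sequentially. L-lipschitz_on (cball 0 R) (Nn n)"
    and bounded: "\<forall>\<^sub>F n in sequentially. S_plus (Nn n) \<subseteq> cball 0 R"
    by (eventually_elim, auto intro: lipschitz_on_subset)+
  have "S_plus N \<subseteq> cball 0 R"
    by (rule order_trans[OF S_plus_subset_cball[OF N] subset_cball]) (simp add: R_def)
  have "L-lipschitz_on (cball 0 R) N"
    by (rule lipschitz_on_mono[OF F_norm_like_lipschitz[OF N]]) (auto simp: L_def)
  obtain C where "0 < C" and C: "\<And>x. nrm x \<le> C * norm x"
    using is_norm_fun_le_norm[OF nrm] by blast
  define \<eta> where "\<eta> = min (1 / 2) (e / (4 * C * R))"
  have "0 < R"
    using F_norm_like_coeff_pos[OF N] unfolding R_def by (simp add: add_pos_nonneg sum_nonneg less_imp_le)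
  then have "0 < \<eta>" and "2 * \<eta> * (C * R) < e"
    using \<open>0 < e\<close> \<open>0 < C\<close> by (auto simp: \<eta>_def min_def field_simps)
  have "\<forall>\<^sub>F n in sequentially. \<forall>x\<in>cball 0 R. dist (Nn n x) (N x) < \<eta>"
    using compact_cball lip \<open>L-lipschitz_on (cball 0 R) N\<close> lim \<open>0 < \<eta>\<close>
    by (rule equi_lipschitz_tendsto_uniformly_on_compact)
  with bounded show "\<forall>\<^sub>F n in sequentially.
      dist (hausdorff_dist_norm nrm (S_plus (Nn n)) (S_plus N)) 0 < e"
  proof eventually_elim
    case (elim n)
    have "\<bar>hausdorff_dist_norm nrm (S_plus (Nn n)) (S_plus N)\<bar> \<le> 2 * \<eta> * (C * R)"
      using elim \<open>0 < C\<close> \<open>0 < \<eta>\<close>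
      by (intro abs_hausdorff_S_plus_le[OF N Nn nrm \<open>S_plus N \<subseteq> cball 0 R\<close> _ _ _ C])
        (auto simp: dist_real_def \<eta>_def)
    then show ?case using \<open>2 * \<eta> * (C * R) < e\<close> by simp
  qed
qed

section \<open>Hausdorff convergence implies pointwise convergence\<close>

lemma eventually_S_plus_near_of_hausdorff:
  assumes Nn: "\<And>n. F_norm_like (Nn n) (mn n)" and N: "F_norm_like N m" and nrm: "is_norm_fun nrm"
    and lim: "(\<lambda>n. hausdorff_dist_norm nrm (S_plus (Nn n)) (S_plus N)) \<longlonglongrightarrow> 0"
    and "y \<in> S_plus N" "0 < e"
  shows "\<forall>\<^sub>F n in sequentially. \<exists>x\<in>S_plus (Nn n). dist x y < e"
proof -
  obtain c where "0 < c" and c: "\<And>x. c * norm x \<le> nrm x"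
    using norm_le_is_norm_fun[OF nrm] by blast
  obtain C where "0 < C" and C: "\<And>x. nrm x \<le> C * norm x"
    using is_norm_fun_le_norm[OF nrm] by blast
  have "\<forall>\<^sub>F n in sequentially. hausdorff_dist_norm nrm (S_plus (Nn n)) (S_plus N) < c * e"
    using order_tendstoD(2)[OF lim] \<open>0 < c\<close> \<open>0 < e\<close> by simp
  then show ?thesis
  proof eventually_elim
    case (elim n)
    let ?R = "(1 + (\<Sum>i\<in>UNIV. 1 / mn n i)) + (1 + (\<Sum>i\<in>UNIV. 1 / m i))"
    have "nrm (x - y) \<le> C * ?R" if "x \<in> S_plus (Nn n)" "y \<in> S_plus N" for x y
    proof -
      have "norm x \<le> 1 + (\<Sum>i\<in>UNIV. 1 / mn n i)" "norm y \<le> 1 + (\<Sum>i\<in>UNIV. 1 / m i)"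
        using subsetD[OF S_plus_subset_cball[OF Nn] that(1)] subsetD[OF S_plus_subset_cball[OF N] that(2)]
        by simp_all
      then have "norm (x - y) \<le> ?R" using norm_triangle_ineq4[of x y] by linarith
      then show ?thesis using C[of "x - y"] \<open>0 < C\<close> by (meson mult_left_mono less_imp_le order_trans)
    qed
    then obtain x where "x \<in> S_plus (Nn n)" "nrm (x - y) < c * e"
      using hausdorff_dist_norm_less_imp_ex_less[OF nrm S_plus_nonempty[OF Nn] _ \<open>y \<in> S_plus N\<close> elim]
      by blast
    moreover have "c * dist x y < c * e"
      using c[of "x - y"] \<open>nrm (x - y) < c * e\<close> by (simp add: dist_norm)
    ultimately show ?case using \<open>0 < c\<close> by auto
  qed
qed

lemma eventually_coeff_le_twice:
  assumes Nn: "\<And>n. F_norm_like (Nn n) (mn n)" and N: "F_norm_like N m"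
    and approx: "\<And>y e. y \<in> S_plus N \<Longrightarrow> 0 < e \<Longrightarrow> \<forall>\<^sub>F n in sequentially. \<exists>x\<in>S_plus (Nn n). dist x y < e"
  shows "\<forall>\<^sub>F n in sequentially. mn n i \<le> 2 * m i"
proof -
  define p where "p = (0 :: real, axis i (1 / m i))"
  have "0 < m i" by (rule F_norm_like_coeff_pos[OF N])
  then have "N p = 1" by (simp add: p_def F_norm_like_axis[OF N])
  then have "p \<in> S_plus N" using \<open>0 < m i\<close> by (simp add: p_def S_plus_def axis_def)
  moreover have "0 < 1 / (2 * m i)" using \<open>0 < m i\<close> by simp
  ultimately have "\<forall>\<^sub>F n in sequentially. \<exists>x\<in>S_plus (Nn n). dist x p < 1 / (2 * m i)"
    by (rule approx)
  then show ?thesis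
  proof eventually_elim
    case (elim n)
    then obtain x where x: "x \<in> S_plus (Nn n)" "dist x p < 1 / (2 * m i)" by auto
    have "\<bar>snd x $ i - 1 / m i\<bar> \<le> norm (snd (x - p))"
      using component_le_norm_cart[of "snd (x - p)" i] by (simp add: p_def)
    also have "\<dots> \<le> dist x p"
      using norm_snd_le[of "snd (x - p)" "fst (x - p)"] by (simp only: prod.collapse dist_norm)
    finally have "\<bar>snd x $ i - 1 / m i\<bar> < 1 / (2 * m i)" using x(2) by linarith
    moreover have "1 / m i - 1 / (2 * m i) = 1 / (2 * m i)" by (simp add: field_simps)
    ultimately have "1 / (2 * m i) \<le> \<bar>snd x $ i\<bar>" by linarith
    then have "1 / (2 * m i) * mn n i \<le> \<bar>snd x $ i\<bar> * mn n i"
      by (rule mult_right_mono) (use F_norm_like_coeff_pos[OF Nn[of n], of i] in simp)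
    also have "\<dots> \<le> 1"
      using F_norm_like_ge_coord[OF Nn[of n], of x i] x(1) by (simp add: S_plus_def)
    finally have "1 / (2 * m i) * mn n i \<le> 1" .
    then show ?case using \<open>0 < m i\<close> by (simp add: field_simps)
  qed
qed

lemma tendsto_one_on_S_plus:
  assumes Nn: "\<And>n. F_norm_like (Nn n) (mn n)"
    and lip: "\<forall>\<^sub>F n in sequentially. L-lipschitz_on UNIV (Nn n)"
    and approx: "\<And>e. 0 < e \<Longrightarrow> \<forall>\<^sub>F n in sequentially. \<exists>x\<in>S_plus (Nn n). dist x y < e"
  shows "(\<lambda>n. Nn n y) \<longlonglongrightarrow> 1"
proof (rule tendstoI)
  fix e :: real assume "0 < e"
  obtain n0 where "L-lipschitz_on UNIV (Nn n0)" using lip by (auto simp: eventually_sequentially)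
  then have "0 \<le> L" by (rule lipschitz_on_nonneg)
  with \<open>0 < e\<close> have "\<forall>\<^sub>F n in sequentially. \<exists>x\<in>S_plus (Nn n). dist x y < e / (L + 1)"
    by (intro approx) simp
  with lip show "\<forall>\<^sub>F n in sequentially. dist (Nn n y) 1 < e"
  proof eventually_elim
    case (elim n)
    then obtain x where "x \<in> S_plus (Nn n)" "dist x y < e / (L + 1)" by auto
    then have "dist (Nn n y) 1 = dist (Nn n y) (Nn n x)" by (simp add: S_plus_def)
    also have "\<dots> \<le> L * dist y x" using elim(1) by (rule lipschitz_onD) auto
    also have "\<dots> \<le> L * (e / (L + 1))"
      using \<open>dist x y < e / (L + 1)\<close> \<open>0 \<le> L\<close>
      by (intro mult_left_mono) (simp_all add: dist_commute)
    also have "\<dots> < e" using \<open>0 \<le> L\<close> \<open>0 < e\<close> by (simp add: field_simps)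
    finally show ?case .
  qed
qed

lemma tendsto_of_tendsto_on_S_plus:
  assumes Nn: "\<And>n. F_norm_like (Nn n) (mn n)" and N: "F_norm_like N m"
    and S_plus_lim: "\<And>y. y \<in> S_plus N \<Longrightarrow> (\<lambda>n. Nn n y) \<longlonglongrightarrow> 1"
  shows "(\<lambda>n. Nn n x) \<longlonglongrightarrow> N x"
proof -
  let ?a = "abs_coords x"
  have a_nonneg: "0 \<le> fst ?a" "\<forall>i. 0 \<le> snd ?a $ i" by (simp_all add: abs_coords_def)
  have "(\<lambda>n. Nn n ?a) \<longlonglongrightarrow> N ?a"
  proof (cases "?a = 0")
    case True
    then show ?thesis
      using is_norm_fun_zero[OF F_norm_like_is_norm_fun[OF Nn]]
        is_norm_fun_zero[OF F_norm_like_is_norm_fun[OF N]] by simp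
  next
    case False
    then have "0 < N ?a" by (rule is_norm_fun_pos[OF F_norm_like_is_norm_fun[OF N]])
    let ?s = "(1 / N ?a) *\<^sub>R ?a"
    have "(\<lambda>n. N ?a * Nn n ?s) \<longlonglongrightarrow> N ?a * 1"
      using scaleR_inverse_in_S_plus[OF N a_nonneg \<open>0 < N ?a\<close>]
      by (intro tendsto_mult tendsto_const S_plus_lim)
    moreover have "N ?a * Nn n ?s = Nn n ?a" for n
      using F_norm_like_scaleR[OF Nn[of n], of "1 / N ?a" ?a] \<open>0 < N ?a\<close> by simp
    ultimately show ?thesis by simp
  qed
  then show ?thesis by (simp add: F_norm_like_abs_coords[OF Nn] F_norm_like_abs_coords[OF N])
qed

lemma pointwise_tendsto_of_hausdorff_tendsto_zero:
  assumes Nn: "\<And>n. F_norm_like (Nn n) (mn n)" and N: "F_norm_like N m" and nrm: "is_norm_fun nrm"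
    and lim: "(\<lambda>n. hausdorff_dist_norm nrm (S_plus (Nn n)) (S_plus N)) \<longlonglongrightarrow> 0"
  shows "(\<lambda>n. Nn n x) \<longlonglongrightarrow> N x"
proof -
  note approx = eventually_S_plus_near_of_hausdorff[OF Nn N nrm lim]
  have "\<forall>\<^sub>F n in sequentially. \<forall>i. mn n i \<le> 2 * m i"
    by (intro eventually_all_finite eventually_coeff_le_twice[OF Nn N approx])
  then have "\<forall>\<^sub>F n in sequentially. (1 + (\<Sum>i\<in>UNIV. 2 * m i))-lipschitz_on UNIV (Nn n)"
    by eventually_elim (rule lipschitz_on_mono[OF F_norm_like_lipschitz[OF Nn]], auto intro: sum_mono)
  then show ?thesis
    using approx by (intro tendsto_of_tendsto_on_S_plus[OF Nn N tendsto_one_on_S_plus[OF Nn]])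
qed

theorem theorem6p4:
  fixes Nn :: "nat \<Rightarrow> real \<times> (real ^ 'd) \<Rightarrow> real"
    and N :: "real \<times> (real ^ 'd) \<Rightarrow> real"
    and nrm :: "real \<times> (real ^ 'd) \<Rightarrow> real"
  assumes "\<And>n. is_F_norm (Nn n)"
    and "is_F_norm N"
    and "is_norm_fun nrm"
  shows "(\<forall>x. (\<lambda>n. Nn n x) \<longlonglongrightarrow> N x) \<longleftrightarrow>
         (\<lambda>n. hausdorff_dist_norm nrm (S_plus (Nn n)) (S_plus N)) \<longlonglongrightarrow> 0"
proof -
  obtain mn where Nn: "\<And>n. F_norm_like (Nn n) (mn n)"
    using is_F_norm_imp_F_norm_like[OF assms(1)] by metis
  obtain m where N: "F_norm_like N m"
    using is_F_norm_imp_F_norm_like[OF assms(2)] by blast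
  show ?thesis
    using hausdorff_S_plus_tendsto_zero[where Nn = Nn, OF Nn N assms(3)]
      pointwise_tendsto_of_hausdorff_tendsto_zero[where Nn = Nn, OF Nn N assms(3)] by blast
qed

end
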